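(* Let $E,F,W$ be finite-dimensional real inner product spaces, $\ell,\ell'\in\mathbf N$, let $L_0\in\mathrm{End}(E;F)\otimes T_\ell(\mathfrak g_1)$ be such that $\mathrm{Sym}(L_0)(D)$ is cocanceling, and let $M\in\mathrm{End}(F;W)\otimes T_{\ell'}(\mathfrak g_1)$. If there exists $\xi_0\in\mathbf R^m$ such that $\mathrm{Sym}(M)(\xi_0)$ is injective, then $\mathrm{Sym}(M\circ L_0)(D)$ is cocanceling.
   Context: $\mathfrak g_1$ is an $m$-dimensional real vector space (the first layer of the Lie algebra of a stratified homogeneous group) with basis $X_1,\dots,X_m$. $\mathcal I_j=\{1,\dots,m\}^j$; $T_j(\mathfrak g_1)$ is the $j$-fold tensor power with basis $X^\otimes_\lambda=X_{\lambda_1}\otimes\cdots\otimes X_{\lambda_j}$. For $L=\sum_{\lambda\in\mathcal I_j}B^\lambda X^\otimes_\lambda\in\mathrm{End}(E;F)\otimes T_j(\mathfrak g_1)$, $\mathrm{Sym}(L)(\xi)=\sum_\lambda\xi_{\lambda_1}\cdots\xi_{\lambda_j}B^\lambda\in\mathrm{End}(E;F)$ for $\xi\in\mathbf R^m$, and $\mathrm{Sym}(L)(D)$ is called cocanceling if $\bigcap_{\xi\in\mathbf R^m}\ker\mathrm{Sym}(L)(\xi)=\{0\}$. For $M=\sum_{\gamma'\in\mathcal I_{\ell'}}M^{\gamma'}X^\otimes_{\gamma'}$ and $L_0=\sum_{\gamma\in\mathcal I_\ell}L_0^{\gamma}X^\otimes_\gamma$, $M\circ L_0=\sum_{\gamma',\gamma}(M^{\gamma'}\circ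 L_0^\gamma)X^\otimes_{\gamma'}\otimes X^\otimes_\gamma\in\mathrm{End}(E;W)\otimes T_{\ell+\ell'}(\mathfrak g_1)$. *)

theory Defs
  imports "HOL-Analysis.Analysis"
begin

text \<open>The first layer g_1 has basis X_1..X_m indexed by a finite type 'm (so m = CARD('m)).
  An element of End(E;F) tensor T_j(g_1) is given by its coefficient family
  B : 'm list \<Rightarrow> (E \<Rightarrow>L F); only lists of length j (multi-indices in I_j) are relevant.\<close>

definition multi_indices :: "nat \<Rightarrow> ('m::finite) list set" where
  "multi_indices j = {lam. length lam = j}"

definition tsym :: "nat \<Rightarrow> (('m::finite) list \<Rightarrow> ('e::real_normed_vector \<Rightarrow>\<^sub>L 'f::real_normed_vector))
    \<Rightarrow> real^'m \<Rightarrow> ('e \<Rightarrow>\<^sub>L 'f)" where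
  "tsym j B xi = (\<Sum>lam\<in>multi_indices j. prod_list (map (\<lambda>k. xi $ k) lam) *\<^sub>R B lam)"

definition cocanceling :: "nat \<Rightarrow> (('m::finite) list \<Rightarrow> ('e::real_normed_vector \<Rightarrow>\<^sub>L 'f::real_normed_vector)) \<Rightarrow> bool" where
  "cocanceling j B \<longleftrightarrow> (\<Inter>xi::real^'m. {v. blinfun_apply (tsym j B xi) v = 0}) = {0}"

text \<open>M o L_0: coefficient of X_gamma' tensor X_gamma (multi-index gamma' @ gamma, with
  length gamma' = l') is M^gamma' o L_0^gamma.\<close>
definition tcomp :: "nat \<Rightarrow> (('m::finite) list \<Rightarrow> ('f::real_normed_vector \<Rightarrow>\<^sub>L 'w::real_normed_vector))
    \<Rightarrow> ('m list \<Rightarrow> ('e::real_normed_vector \<Rightarrow>\<^sub>L 'f)) \<Rightarrow> ('m list \<Rightarrow> ('e \<Rightarrow>\<^sub>L 'w))" where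
  "tcomp l' M L0 = (\<lambda>kappa. M (take l' kappa) o\<^sub>L L0 (drop l' kappa))"

end

theory Submission
  imports Defs "HOL-Computational_Algebra.Polynomial"
begin

text \<open>Since \<open>Sym(M \<circ> L\<^sub>0)(\<xi>) = Sym(M)(\<xi>) \<circ> Sym(L\<^sub>0)(\<xi>)\<close>, a vector \<open>v\<close> in the joint kernel
  satisfies \<open>Sym(M)(\<xi>) (Sym(L\<^sub>0)(\<xi>) v) = 0\<close> for all \<open>\<xi>\<close>. On the line \<open>\<xi>\<^sub>0 + t \<eta>\<close> through the
  point where \<open>Sym(M)\<close> is injective, both factors are polynomial in \<open>t\<close>. If
  \<open>Sym(L\<^sub>0)(\<xi>\<^sub>0 + t \<eta>) v = t\<^sup>k h(t)\<close> with \<open>h(0) \<noteq> 0\<close>, then \<open>Sym(M)(\<xi>\<^sub>0 + t \<eta>) h(t) = 0\<close> for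
  \<open>t \<noteq> 0\<close>, so by continuity \<open>Sym(M)(\<xi>\<^sub>0) h(0) = 0\<close>, contradicting injectivity. Hence
  \<open>Sym(L\<^sub>0)(\<xi>) v = 0\<close> for every \<open>\<xi>\<close>, and \<open>v = 0\<close> because \<open>Sym(L\<^sub>0)(D)\<close> is cocanceling.\<close>

lemma power_sum_factor_lowest:
  fixes a :: "nat \<Rightarrow> 'a::real_vector"
  assumes "k \<le> n" and "\<And>i. i < k \<Longrightarrow> a i = 0"
  shows "(\<Sum>i\<le>n. t ^ i *\<^sub>R a i) = t ^ k *\<^sub>R (\<Sum>i\<le>n - k. t ^ i *\<^sub>R a (k + i))"
proof -
  have "(\<Sum>i\<le>n. t ^ i *\<^sub>R a i) = (\<Sum>i\<in>{k..n}. t ^ i *\<^sub>R a i)"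
  proof (rule sum.mono_neutral_right)
    show "\<forall>i\<in>{..n} - {k..n}. t ^ i *\<^sub>R a i = 0"
      using assms(2) by auto
  qed auto
  also have "\<dots> = (\<Sum>i\<in>{0..n - k}. t ^ (k + i) *\<^sub>R a (k + i))"
    by (simp only: sum.atLeastAtMost_shift_0[OF assms(1)] comp_def)
  also have "\<dots> = t ^ k *\<^sub>R (\<Sum>i\<le>n - k. t ^ i *\<^sub>R a (k + i))"
    by (simp add: atMost_atLeast0 scaleR_sum_right power_add)
  finally show ?thesis .
qed

lemma power_sum_coeffs_zero_if_annihilated:
  fixes a :: "nat \<Rightarrow> 'a::real_normed_vector" and A :: "real \<Rightarrow> 'a \<Rightarrow>\<^sub>L 'b::real_normed_vector"
  assumes "isCont A 0" and "inj (blinfun_apply (A 0))"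
    and "\<And>t. A t (\<Sum>i\<le>n. t ^ i *\<^sub>R a i) = 0"
    and "i \<le> n"
  shows "a i = 0"
proof (rule ccontr)
  assume "a i \<noteq> 0"
  then obtain k where k: "k \<le> n" "a k \<noteq> 0" and below_k: "\<And>j. j < k \<Longrightarrow> a j = 0"
    using exists_least_iff[of "\<lambda>j. j \<le> n \<and> a j \<noteq> 0"] \<open>i \<le> n\<close>
    by (metis less_le_trans order.strict_implies_order)
  define h where "h t = (\<Sum>i\<le>n - k. t ^ i *\<^sub>R a (k + i))" for t
  have "A t (h t) = 0" if "t \<noteq> 0" for t
    using assms(3)[of t] that
    by (simp add: power_sum_factor_lowest[OF k(1) below_k] h_def blinfun.scaleR_right)
  then have "\<forall>\<^sub>F t in at 0. A t (h t) = 0"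
    by (auto simp: eventually_at_filter)
  moreover have "((\<lambda>t. A t (h t)) \<longlongrightarrow> A 0 (h 0)) (at 0)"
    using assms(1) unfolding h_def isCont_def
    by (intro blinfun.tendsto tendsto_intros) auto
  ultimately have "A 0 (h 0) = 0"
    by (metis tendsto_eventually tendsto_unique trivial_limit_at)
  moreover have "h 0 = a k"
    unfolding h_def by (simp add: power_0_left if_distrib[of "\<lambda>c. c *\<^sub>R _"] cong: if_cong)
  ultimately show False
    using assms(2) k(2) by (metis blinfun.zero_right injD)
qed

lemma sum_poly_scaleR_eq_power_sum:
  fixes p :: "'i \<Rightarrow> real poly" and w :: "'i \<Rightarrow> 'a::real_vector"
  assumes "\<And>s. s \<in> S \<Longrightarrow> degree (p s) \<le> n"
  shows "(\<Sum>s\<in>S. poly (p s) t *\<^sub>R w s) = (\<Sum>i\<le>n. t ^ i *\<^sub>R (\<Sum>s\<in>S. coeff (p s) i *\<^sub>R w s))"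
proof -
  have "poly (p s) t = (\<Sum>i\<le>n. coeff (p s) i * t ^ i)" if "s \<in> S" for s
    by (subst poly_as_sum_of_monoms'[OF assms[OF that], symmetric]) (simp add: poly_sum poly_monom)
  then have "(\<Sum>s\<in>S. poly (p s) t *\<^sub>R w s) = (\<Sum>s\<in>S. \<Sum>i\<le>n. (t ^ i * coeff (p s) i) *\<^sub>R w s)"
    by (intro sum.cong) (simp_all add: scaleR_sum_left mult.commute)
  also have "\<dots> = (\<Sum>i\<le>n. t ^ i *\<^sub>R (\<Sum>s\<in>S. coeff (p s) i *\<^sub>R w s))"
    by (subst sum.swap) (simp add: scaleR_sum_right)
  finally show ?thesis .
qed

lemma tsym_on_line_eq_power_sum:
  fixes B :: "('m::finite) list \<Rightarrow> 'e::real_normed_vector \<Rightarrow>\<^sub>L 'f::real_normed_vector"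
  obtains C where "\<And>t. tsym j B (xi0 + t *\<^sub>R eta) = (\<Sum>i\<le>j. t ^ i *\<^sub>R C i)"
proof
  define p where "p lam = (\<Prod>k\<leftarrow>lam. [:xi0 $ k, eta $ k:])" for lam :: "'m list"
  have poly_p: "poly (p lam) t = (\<Prod>k\<leftarrow>lam. (xi0 + t *\<^sub>R eta) $ k)" for lam t
    by (induction lam) (simp_all add: p_def algebra_simps)
  have degree_p: "degree (p lam) \<le> length lam" for lam
  proof (induction lam)
    case (Cons k lam)
    have "degree (p (k # lam)) \<le> degree [:xi0 $ k, eta $ k:] + degree (p lam)"
      unfolding p_def list.map prod_list.Cons by (rule degree_mult_le)
    with Cons.IH show ?case
      using degree_pCons_le[of "xi0 $ k" "[:eta $ k:]"] by simp
  qed (simp add: p_def)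
  show "tsym j B (xi0 + t *\<^sub>R eta) =
      (\<Sum>i\<le>j. t ^ i *\<^sub>R (\<Sum>lam\<in>multi_indices j. coeff (p lam) i *\<^sub>R B lam))" for t
    unfolding tsym_def poly_p[symmetric]
    by (rule sum_poly_scaleR_eq_power_sum) (metis degree_p mem_Collect_eq multi_indices_def)
qed

lemma tsym_apply:
  "tsym j B xi v = (\<Sum>lam\<in>multi_indices j. (\<Prod>k\<leftarrow>lam. xi $ k) *\<^sub>R B lam v)"
  by (simp add: tsym_def blinfun.sum_left blinfun.scaleR_left)

lemma multi_indices_add:
  "multi_indices (m + n) = (\<lambda>(a, b). a @ b) ` (multi_indices m \<times> multi_indices n)"
proof (intro set_eqI iffI)
  fix x
  assume "x \<in> multi_indices (m + n)"
  then show "x \<in> (\<lambda>(a, b). a @ b) ` (multi_indices m \<times> multi_indices n)"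
    by (intro image_eqI[of _ _ "(take m x, drop m x)"]) (auto simp: multi_indices_def)
qed (auto simp: multi_indices_def)

lemma tsym_tcomp: "tsym (l + l') (tcomp l' M L0) xi = tsym l' M xi o\<^sub>L tsym l L0 xi"
proof (rule blinfun_eqI)
  fix v
  let ?x = "\<lambda>lam. \<Prod>k\<leftarrow>lam. xi $ k"
  have inj: "inj_on (\<lambda>(a, b). a @ b) (multi_indices l' \<times> multi_indices l)"
    by (auto simp: inj_on_def multi_indices_def)
  have "tsym (l + l') (tcomp l' M L0) xi v =
      (\<Sum>(a, b)\<in>multi_indices l' \<times> multi_indices l. (?x a * ?x b) *\<^sub>R M a (L0 b v))"
    unfolding tsym_apply add.commute[of l] multi_indices_add[of l'] sum.reindex[OF inj]
    by (intro sum.cong) (auto simp: tcomp_def multi_indices_def)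
  also have "\<dots> = (\<Sum>a\<in>multi_indices l'. \<Sum>b\<in>multi_indices l. (?x a * ?x b) *\<^sub>R M a (L0 b v))"
    by (rule sum.cartesian_product[symmetric])
  also have "\<dots> = tsym l' M xi (tsym l L0 xi v)"
    unfolding tsym_apply[of l' M]
    by (simp add: tsym_apply blinfun.sum_right blinfun.scaleR_right scaleR_sum_right)
  finally show "tsym (l + l') (tcomp l' M L0) xi v = (tsym l' M xi o\<^sub>L tsym l L0 xi) v"
    by simp
qed

lemma tsym_apply_eq_zero_if_annihilated:
  assumes "inj (tsym l' M xi0)" and "\<And>xi. tsym l' M xi (tsym l L0 xi v) = 0"
  shows "tsym l L0 xi v = 0"
proof -
  define eta where "eta = xi - xi0"
  obtain C where C: "\<And>t. tsym l' M (xi0 + t *\<^sub>R eta) = (\<Sum>i\<le>l'. t ^ i *\<^sub>R C i)"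
    using tsym_on_line_eq_power_sum by blast
  obtain D where D: "\<And>t. tsym l L0 (xi0 + t *\<^sub>R eta) = (\<Sum>i\<le>l. t ^ i *\<^sub>R D i)"
    using tsym_on_line_eq_power_sum by blast
  let ?A = "\<lambda>t. tsym l' M (xi0 + t *\<^sub>R eta)"
  have cont: "isCont ?A 0"
    unfolding C by (intro continuous_intros)
  have annihilated: "?A t (\<Sum>i\<le>l. t ^ i *\<^sub>R D i v) = 0" for t
    using assms(2)[of "xi0 + t *\<^sub>R eta"] by (simp add: D blinfun.sum_left blinfun.scaleR_left)
  have "D i v = 0" if "i \<le> l" for i
    using power_sum_coeffs_zero_if_annihilated[OF cont _ annihilated that] assms(1) by simp
  then show ?thesis
    using D[of 1] by (simp add: eta_def blinfun.sum_left blinfun.scaleR_left)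
qed

theorem proposition6p1:
  fixes L0 :: "('m::finite) list \<Rightarrow> ('e::euclidean_space \<Rightarrow>\<^sub>L 'f::euclidean_space)"
    and M :: "'m list \<Rightarrow> ('f \<Rightarrow>\<^sub>L 'w::euclidean_space)"
    and l l' :: nat
  assumes "cocanceling l L0"
    and "\<exists>xi0::real^'m. inj (blinfun_apply (tsym l' M xi0))"
  shows "cocanceling (l + l') (tcomp l' M L0)"
proof -
  obtain xi0 :: "real^'m" where inj: "inj (tsym l' M xi0)"
    using assms(2) by blast
  have "v = 0" if "\<And>xi. tsym (l + l') (tcomp l' M L0) xi v = 0" for v
  proof -
    have "tsym l' M xi (tsym l L0 xi v) = 0" for xi
      using that[of xi] by (simp add: tsym_tcomp)
    then have "tsym l L0 xi v = 0" for xi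
      by (rule tsym_apply_eq_zero_if_annihilated[OF inj])
    then show "v = 0"
      using assms(1) by (auto simp: cocanceling_def)
  qed
  then show ?thesis
    unfolding cocanceling_def by auto
qed

end
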